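(* Let $A\in\mathbb{C}^{n\times n}$ and let $H$ be a subspace of $\mathbb{C}^n$ invariant under $A$, with $A_{|_H}$ the restriction of $A$ to $H$. For $\lambda\in\mathbb{C}$ let $\alpha_\lambda(\cdot)$ and $\gamma_\lambda(\cdot)$ denote the algebraic and geometric multiplicities of $\lambda$ as an eigenvalue (taken to be $0$ if $\lambda$ is not an eigenvalue). Then for every $\lambda\in\mathbb{C}$, $$\alpha_\lambda(A)\le \alpha_\lambda(A_{|_H})+n-\dim H,\qquad \gamma_\lambda(A)\le\gamma_\lambda(A_{|_H})+n-\dim H.$$ Further, if $\mu$ is a vector norm on $\mathbb{C}^n$ and $|\lambda|>\mu^0_H(A)$, then $\alpha_\lambda(A)\le n-\dim H$ and $\gamma_\lambda(A)\le n-\dim H$.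
   Context: For a vector norm $\mu$ on $\mathbb{C}^n$ and a subspace $H$ invariant under $A$, the partial norm is $\mu^0_H(A)=\sup_{0\ne x\in H}\mu(Ax)/\mu(x)$. *)

theory Defs
  imports "Jordan_Normal_Form.Jordan_Normal_Form_Uniqueness"
begin

abbreviation cvs :: "nat \<Rightarrow> (complex, complex vec) module" where
  "cvs n \<equiv> module_vec TYPE(complex) n"

definition is_subspace :: "nat \<Rightarrow> complex vec set \<Rightarrow> bool" where
  "is_subspace n H \<longleftrightarrow> subspace class_ring H (cvs n)"

definition subspace_dim :: "nat \<Rightarrow> complex vec set \<Rightarrow> nat" where
  "subspace_dim n H = vectorspace.dim class_ring ((cvs n)\<lparr>carrier := H\<rparr>)"

definition invariant_under :: "complex mat \<Rightarrow> complex vec set \<Rightarrow> bool" where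
  "invariant_under A H \<longleftrightarrow> (\<forall>v\<in>H. A *\<^sub>v v \<in> H)"

definition basis_mat :: "nat \<Rightarrow> complex vec set \<Rightarrow> complex mat \<Rightarrow> nat \<Rightarrow> bool" where
  "basis_mat n H V d \<longleftrightarrow> V \<in> carrier_mat n d \<and> distinct (cols V) \<and>
     module.lin_indpt class_ring (cvs n) (set (cols V)) \<and>
     module.span class_ring (cvs n) (set (cols V)) = H"

text \<open>The matrix of the restriction A|_H with respect to some basis of H
  (well defined up to similarity): A V = V B where the columns of V form a basis of H.\<close>
definition restr_mat :: "complex mat \<Rightarrow> complex vec set \<Rightarrow> complex mat" where
  "restr_mat A H = (SOME B. \<exists>V d. basis_mat (dim_row A) H V d \<and> B \<in> carrier_mat d d \<and> A * V = V * B)"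

definition alg_mult :: "complex mat \<Rightarrow> complex \<Rightarrow> nat" where
  "alg_mult A l = Polynomial.order l (char_poly A)"

definition geom_mult :: "complex mat \<Rightarrow> complex \<Rightarrow> nat" where
  "geom_mult A l = kernel_dim (A - l \<cdot>\<^sub>m 1\<^sub>m (dim_row A))"

definition is_vec_norm :: "nat \<Rightarrow> (complex vec \<Rightarrow> real) \<Rightarrow> bool" where
  "is_vec_norm n \<mu> \<longleftrightarrow>
     (\<forall>x\<in>carrier_vec n. 0 \<le> \<mu> x \<and> (\<mu> x = 0 \<longleftrightarrow> x = 0\<^sub>v n)) \<and>
     (\<forall>x\<in>carrier_vec n. \<forall>c. \<mu> (c \<cdot>\<^sub>v x) = cmod c * \<mu> x) \<and>
     (\<forall>x\<in>carrier_vec n. \<forall>y\<in>carrier_vec n. \<mu> (x + y) \<le> \<mu> x + \<mu> y)"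

definition partial_norm :: "(complex vec \<Rightarrow> real) \<Rightarrow> complex vec set \<Rightarrow> complex mat \<Rightarrow> real" where
  "partial_norm \<mu> H A = Sup {\<mu> (A *\<^sub>v x) / \<mu> x | x. x \<in> H \<and> x \<noteq> 0\<^sub>v (dim_vec x)}"

end

theory Submission
  imports Defs "Jordan_Normal_Form.DL_Rank"
begin

(* Extend a basis V of H to an invertible matrix W = [V | U]. Then W^-1 A W = [[B, C], [0, D]],
   where A V = V B and D has size n - dim H. The characteristic polynomial of A is therefore
   chi_B * chi_D, which bounds the algebraic multiplicities. For the geometric ones, project the
   kernel of the block matrix minus l onto its last n - dim H coordinates: the kernel of that
   projection is the kernel of B - l, padded with zeros.
   An eigenvector y of B gives the eigenvector V y of A in H, for which mu(A V y) / mu(V y) = |l|.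
   Hence |l| > mu^0_H(A) rules out l as an eigenvalue of B, and both multiplicities of B vanish.
   For this the quotients must be bounded, or the supremum is meaningless; boundedness follows
   from the equivalence of mu with the 1-norm, proved by Bolzano-Weierstrass. *)

section \<open>Vector norms on C^n\<close>

definition norm1_vec :: "complex vec \<Rightarrow> real" where
  "norm1_vec x = (\<Sum>i<dim_vec x. cmod (x $ i))"

lemma norm1_vec_smult: "norm1_vec (a \<cdot>\<^sub>v x) = cmod a * norm1_vec x"
  unfolding norm1_vec_def by (simp add: norm_mult sum_distrib_left)

lemma norm_index_le_norm1_vec: "i < dim_vec x \<Longrightarrow> cmod (x $ i) \<le> norm1_vec x"
  unfolding norm1_vec_def by (rule member_le_sum) auto

lemma norm1_vec_minus_commute:
  "dim_vec x = dim_vec y \<Longrightarrow> norm1_vec (x - y) = norm1_vec (y - x)"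
  unfolding norm1_vec_def by (auto intro!: sum.cong simp: norm_minus_commute)

lemma is_vec_norm_nonneg: "is_vec_norm n \<mu> \<Longrightarrow> x \<in> carrier_vec n \<Longrightarrow> 0 \<le> \<mu> x"
  unfolding is_vec_norm_def by auto

lemma is_vec_norm_eq_0_iff: "is_vec_norm n \<mu> \<Longrightarrow> x \<in> carrier_vec n \<Longrightarrow> \<mu> x = 0 \<longleftrightarrow> x = 0\<^sub>v n"
  unfolding is_vec_norm_def by auto

lemma is_vec_norm_pos: "is_vec_norm n \<mu> \<Longrightarrow> x \<in> carrier_vec n \<Longrightarrow> x \<noteq> 0\<^sub>v n \<Longrightarrow> 0 < \<mu> x"
  unfolding is_vec_norm_def by force

lemma is_vec_norm_smult: "is_vec_norm n \<mu> \<Longrightarrow> x \<in> carrier_vec n \<Longrightarrow> \<mu> (c \<cdot>\<^sub>v x) = cmod c * \<mu> x"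
  unfolding is_vec_norm_def by auto

lemma is_vec_norm_triangle:
  "is_vec_norm n \<mu> \<Longrightarrow> x \<in> carrier_vec n \<Longrightarrow> y \<in> carrier_vec n \<Longrightarrow> \<mu> (x + y) \<le> \<mu> x + \<mu> y"
  unfolding is_vec_norm_def by auto

lemma is_vec_norm_le_sum_unit_vec:
  assumes \<mu>: "is_vec_norm n \<mu>" and x: "x \<in> carrier_vec n"
  shows "\<mu> x \<le> (\<Sum>i<n. cmod (x $ i) * \<mu> (unit_vec n i))"
proof -
  define trunc where "trunc k = vec n (\<lambda>i. if i < k then x $ i else 0)" for k
  have "\<mu> (trunc k) \<le> (\<Sum>i<k. cmod (x $ i) * \<mu> (unit_vec n i))" if "k \<le> n" for k
    using that
  proof (induction k)
    case 0
    have "trunc 0 = 0\<^sub>v n" unfolding trunc_def by auto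
    then show ?case using is_vec_norm_eq_0_iff[OF \<mu>, of "0\<^sub>v n"] by simp
  next
    case (Suc k)
    have "trunc (Suc k) = trunc k + (x $ k) \<cdot>\<^sub>v unit_vec n k"
      unfolding trunc_def using Suc.prems by (intro eq_vecI) (auto simp: less_Suc_eq)
    then have "\<mu> (trunc (Suc k)) \<le> \<mu> (trunc k) + \<mu> ((x $ k) \<cdot>\<^sub>v unit_vec n k)"
      using is_vec_norm_triangle[OF \<mu>] by (simp add: trunc_def)
    then show ?case using Suc is_vec_norm_smult[OF \<mu>] by simp
  qed
  moreover have "trunc n = x" unfolding trunc_def using x by auto
  ultimately show ?thesis by force
qed

lemma is_vec_norm_le_norm1_vec:
  assumes \<mu>: "is_vec_norm n \<mu>"
  obtains M where "M \<ge> 0" "\<And>x. x \<in> carrier_vec n \<Longrightarrow> \<mu> x \<le> M * norm1_vec x"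
proof -
  define M where "M = (\<Sum>i<n. \<mu> (unit_vec n i))"
  have "\<mu> x \<le> M * norm1_vec x" if x: "x \<in> carrier_vec n" for x
  proof -
    have "\<mu> x \<le> (\<Sum>i<n. cmod (x $ i) * \<mu> (unit_vec n i))"
      by (rule is_vec_norm_le_sum_unit_vec[OF \<mu> x])
    also have "\<dots> \<le> (\<Sum>i<n. cmod (x $ i) * M)"
      unfolding M_def using is_vec_norm_nonneg[OF \<mu>]
      by (intro sum_mono mult_left_mono member_le_sum) auto
    also have "\<dots> = M * norm1_vec x"
      unfolding norm1_vec_def using x by (simp add: sum_distrib_left mult.commute)
    finally show ?thesis .
  qed
  moreover have "M \<ge> 0" unfolding M_def using is_vec_norm_nonneg[OF \<mu>] by (simp add: sum_nonneg)
  ultimately show ?thesis using that by blast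
qed

lemma bounded_seqs_common_convergent_subseq:
  fixes f :: "'i \<Rightarrow> nat \<Rightarrow> real"
  assumes "finite K" and bounded: "\<And>k j. k \<in> K \<Longrightarrow> \<bar>f k j\<bar> \<le> B"
  shows "\<exists>r. strict_mono r \<and> (\<forall>k\<in>K. convergent (\<lambda>j. f k (r j)))"
  using assms
proof (induction K rule: finite_induct)
  case empty
  show ?case using strict_mono_id by blast
next
  case (insert k K)
  then obtain r where r: "strict_mono r" "\<forall>k'\<in>K. convergent (\<lambda>j. f k' (r j))" by auto
  obtain s where s: "strict_mono s" "monoseq (\<lambda>j. f k (r (s j)))"
    using seq_monosub[of "\<lambda>j. f k (r j)"] by auto
  have "Bseq (\<lambda>j. f k (r (s j)))" using insert.prems by (intro BseqI'[of _ B]) auto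
  with s have "convergent (\<lambda>j. f k (r (s j)))" using Bseq_monoseq_convergent by blast
  moreover have "convergent (\<lambda>j. f k' (r (s j)))" if "k' \<in> K" for k'
    using convergent_subseq_convergent[OF r(2)[rule_format, OF that] s(1)] by (simp add: o_def)
  ultimately show ?case using strict_mono_o[OF r(1) s(1)] by (auto simp: o_def)
qed

lemma norm1_vec_convergent_subseq:
  fixes y :: "nat \<Rightarrow> complex vec"
  assumes y: "\<And>j. y j \<in> carrier_vec n" and bounded: "\<And>j. norm1_vec (y j) \<le> B"
  obtains r z where "strict_mono r" "z \<in> carrier_vec n" "(\<lambda>j. norm1_vec (y (r j) - z)) \<longlonglongrightarrow> 0"
proof -
  \<comment> \<open>Bolzano-Weierstrass for the \<open>2 n\<close> real sequences formed by the real and imaginary parts\<close>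
  let ?f = "\<lambda>(i, p) j. p (y j $ i)"
  have "\<bar>?f (i, p) j\<bar> \<le> B" if "(i, p) \<in> {..<n} \<times> {Re, Im}" for i p j
    using that norm_index_le_norm1_vec[of i "y j"] y[of j] bounded[of j]
      abs_Re_le_cmod abs_Im_le_cmod
    by (fastforce intro: order_trans)
  then obtain r where r: "strict_mono r"
    and conv: "\<forall>k\<in>{..<n} \<times> {Re, Im}. convergent (\<lambda>j. ?f k (r j))"
    using bounded_seqs_common_convergent_subseq[of "{..<n} \<times> {Re, Im}" ?f B] by blast
  define z where "z = vec n (\<lambda>i. Complex (lim (\<lambda>j. Re (y (r j) $ i))) (lim (\<lambda>j. Im (y (r j) $ i))))"
  have "(\<lambda>j. y (r j) $ i) \<longlonglongrightarrow> z $ i" if "i < n" for i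
    using conv that unfolding z_def tendsto_complex_iff by (auto simp: convergent_LIMSEQ_iff)
  then have "(\<lambda>j. \<Sum>i<n. cmod (y (r j) $ i - z $ i)) \<longlonglongrightarrow> (\<Sum>i<n. 0)"
    by (intro tendsto_sum tendsto_norm_zero) (auto simp: LIM_zero)
  moreover have "norm1_vec (y (r j) - z) = (\<Sum>i<n. cmod (y (r j) $ i - z $ i))" for j
    unfolding norm1_vec_def using y[of "r j"] by (auto simp: z_def)
  ultimately show ?thesis using that[OF r, of z] by (simp add: z_def)
qed

lemma is_vec_norm_not_tendsto_0:
  assumes \<mu>: "is_vec_norm n \<mu>" and y: "\<And>j. y j \<in> carrier_vec n"
    and y_norm1: "\<And>j. norm1_vec (y j) = 1"
  shows "\<not> (\<lambda>j. \<mu> (y j)) \<longlonglongrightarrow> 0"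
proof
  assume y_lim: "(\<lambda>j. \<mu> (y j)) \<longlonglongrightarrow> 0"
  obtain r z where r: "strict_mono r" and z: "z \<in> carrier_vec n"
    and lim: "(\<lambda>j. norm1_vec (y (r j) - z)) \<longlonglongrightarrow> 0"
    by (rule norm1_vec_convergent_subseq[where y = y and B = 1]) (use y y_norm1 in auto)
  obtain M where M: "\<And>x. x \<in> carrier_vec n \<Longrightarrow> \<mu> x \<le> M * norm1_vec x"
    using is_vec_norm_le_norm1_vec[OF \<mu>] by metis
  have bound: "\<mu> z \<le> \<mu> (y (r j)) + M * norm1_vec (y (r j) - z)" for j
  proof -
    have "y (r j) + (z - y (r j)) = z" using y[of "r j"] z by auto
    then have "\<mu> z \<le> \<mu> (y (r j)) + \<mu> (z - y (r j))"
      using is_vec_norm_triangle[OF \<mu> y[of "r j"], of "z - y (r j)"] y[of "r j"] z by simp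
    also have "\<mu> (z - y (r j)) \<le> M * norm1_vec (y (r j) - z)"
      using M[of "z - y (r j)"] norm1_vec_minus_commute[of z "y (r j)"] y[of "r j"] z by simp
    finally show ?thesis by simp
  qed
  have "(\<lambda>j. \<mu> (y (r j)) + M * norm1_vec (y (r j) - z)) \<longlonglongrightarrow> 0"
    using tendsto_add[OF LIMSEQ_subseq_LIMSEQ[OF y_lim r] tendsto_mult_right_zero[OF lim]]
    by (simp add: o_def)
  then have "\<mu> z \<le> 0" using bound by (intro LIMSEQ_le_const) auto
  then have "z = 0\<^sub>v n" using is_vec_norm_nonneg[OF \<mu> z] is_vec_norm_eq_0_iff[OF \<mu> z] by simp
  with lim y_norm1 y have "(\<lambda>j. 1::real) \<longlonglongrightarrow> 0" by simp
  then show False by (simp add: LIMSEQ_const_iff)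
qed

lemma norm1_vec_le_is_vec_norm:
  assumes \<mu>: "is_vec_norm n \<mu>"
  obtains c where "c > 0" "\<And>x. x \<in> carrier_vec n \<Longrightarrow> c * norm1_vec x \<le> \<mu> x"
proof (rule ccontr)
  assume "\<not> thesis"
  have "\<exists>x\<in>carrier_vec n. \<mu> x < 1 / real (Suc j) * norm1_vec x" for j
  proof (rule ccontr)
    assume "\<not> (\<exists>x\<in>carrier_vec n. \<mu> x < 1 / real (Suc j) * norm1_vec x)"
    then have "1 / real (Suc j) * norm1_vec x \<le> \<mu> x" if "x \<in> carrier_vec n" for x
      using that by (simp add: not_less)
    with that[of "1 / real (Suc j)"] \<open>\<not> thesis\<close> show False by simp
  qed
  then obtain x where x: "\<And>j. x j \<in> carrier_vec n"
    and x_small: "\<And>j. \<mu> (x j) < 1 / real (Suc j) * norm1_vec (x j)"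
    by metis
  have x_pos: "norm1_vec (x j) > 0" for j
  proof -
    have "0 < 1 / real (Suc j) * norm1_vec (x j)"
      using x_small[of j] is_vec_norm_nonneg[OF \<mu> x, of j] by linarith
    then show ?thesis by (simp add: zero_less_divide_iff add_pos_nonneg)
  qed
  define y where "y j = complex_of_real (inverse (norm1_vec (x j))) \<cdot>\<^sub>v x j" for j
  have y: "y j \<in> carrier_vec n" for j unfolding y_def using x by simp
  have y_norm1: "norm1_vec (y j) = 1" for j
    unfolding y_def norm1_vec_smult using x_pos[of j] by (simp add: norm_inverse)
  have "(\<lambda>j. \<mu> (y j)) \<longlonglongrightarrow> 0"
  proof (rule LIMSEQ_norm_0)
    fix j
    have "\<mu> (y j) = \<mu> (x j) / norm1_vec (x j)"
      unfolding y_def using is_vec_norm_smult[OF \<mu> x] x_pos[of j]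
        by (simp add: norm_inverse divide_inverse_commute)
    also have "\<dots> < 1 / real (Suc j)" using x_small[of j] x_pos[of j] by (simp add: divide_less_eq)
    finally show "norm (\<mu> (y j)) < 1 / real (Suc j)" using is_vec_norm_nonneg[OF \<mu> y] by simp
  qed
  with is_vec_norm_not_tendsto_0[OF \<mu> y y_norm1] show False by contradiction
qed

lemma norm1_vec_mult_mat_vec_le:
  assumes A: "A \<in> carrier_mat m n"
  obtains K where "K \<ge> 0" "\<And>x. x \<in> carrier_vec n \<Longrightarrow> norm1_vec (A *\<^sub>v x) \<le> K * norm1_vec x"
proof -
  define K where "K = (\<Sum>i<m. \<Sum>j<n. cmod (A $$ (i, j)))"
  have "norm1_vec (A *\<^sub>v x) \<le> K * norm1_vec x" if x: "x \<in> carrier_vec n" for x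
  proof -
    have "norm1_vec (A *\<^sub>v x) = (\<Sum>i<m. cmod (\<Sum>j<n. A $$ (i, j) * x $ j))"
      unfolding norm1_vec_def using A x
        by (auto intro!: sum.cong simp: scalar_prod_def atLeast0LessThan)
    also have "\<dots> \<le> (\<Sum>i<m. \<Sum>j<n. cmod (A $$ (i, j)) * cmod (x $ j))"
      by (intro sum_mono order_trans[OF norm_sum]) (simp add: norm_mult)
    also have "\<dots> \<le> (\<Sum>i<m. \<Sum>j<n. cmod (A $$ (i, j)) * norm1_vec x)"
      using x by (intro sum_mono mult_left_mono norm_index_le_norm1_vec) auto
    also have "\<dots> = K * norm1_vec x" unfolding K_def by (simp add: sum_distrib_right)
    finally show ?thesis .
  qed
  moreover have "K \<ge> 0" unfolding K_def by (intro sum_nonneg) auto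
  ultimately show ?thesis using that by blast
qed

lemma is_vec_norm_mult_mat_vec_le:
  assumes \<mu>: "is_vec_norm n \<mu>" and A: "A \<in> carrier_mat n n"
  obtains K where "\<And>x. x \<in> carrier_vec n \<Longrightarrow> \<mu> (A *\<^sub>v x) \<le> K * \<mu> x"
proof -
  obtain M where M: "M \<ge> 0" "\<And>x. x \<in> carrier_vec n \<Longrightarrow> \<mu> x \<le> M * norm1_vec x"
    using is_vec_norm_le_norm1_vec[OF \<mu>] by blast
  obtain c where c: "c > 0" "\<And>x. x \<in> carrier_vec n \<Longrightarrow> c * norm1_vec x \<le> \<mu> x"
    using norm1_vec_le_is_vec_norm[OF \<mu>] by blast
  obtain K where K: "K \<ge> 0" "\<And>x. x \<in> carrier_vec n \<Longrightarrow> norm1_vec (A *\<^sub>v x) \<le> K * norm1_vec x"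
    using norm1_vec_mult_mat_vec_le[OF A] by blast
  have "\<mu> (A *\<^sub>v x) \<le> (M * K / c) * \<mu> x" if x: "x \<in> carrier_vec n" for x
  proof -
    have "\<mu> (A *\<^sub>v x) \<le> M * norm1_vec (A *\<^sub>v x)" using M(2) A x by simp
    also have "\<dots> \<le> M * (K * norm1_vec x)" using M(1) K(2)[OF x] by (rule mult_left_mono[rotated])
    also have "\<dots> \<le> M * (K * (\<mu> x / c))"
      using M(1) K(1) c x by (intro mult_left_mono) (auto simp: field_simps)
    finally show ?thesis by simp
  qed
  then show ?thesis using that by blast
qed

lemma bdd_above_partial_norm_ratios:
  assumes \<mu>: "is_vec_norm n \<mu>" and A: "A \<in> carrier_mat n n" and H: "H \<subseteq> carrier_vec n"
  shows "bdd_above {\<mu> (A *\<^sub>v x) / \<mu> x | x. x \<in> H \<and> x \<noteq> 0\<^sub>v (dim_vec x)}"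
proof -
  obtain K where K: "\<And>x. x \<in> carrier_vec n \<Longrightarrow> \<mu> (A *\<^sub>v x) \<le> K * \<mu> x"
    using is_vec_norm_mult_mat_vec_le[OF \<mu> A] by blast
  show ?thesis
  proof (rule bdd_aboveI[where M = K])
    fix r assume "r \<in> {\<mu> (A *\<^sub>v x) / \<mu> x | x. x \<in> H \<and> x \<noteq> 0\<^sub>v (dim_vec x)}"
    then obtain x where r: "r = \<mu> (A *\<^sub>v x) / \<mu> x" and x: "x \<in> carrier_vec n" "x \<noteq> 0\<^sub>v n"
      using H by auto
    then show "r \<le> K" using K[OF x(1)] is_vec_norm_pos[OF \<mu> x] by (simp add: divide_le_eq)
  qed
qed

lemma eigenvalue_cmod_le_partial_norm:
  assumes \<mu>: "is_vec_norm n \<mu>" and A: "A \<in> carrier_mat n n" and H: "H \<subseteq> carrier_vec n"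
    and x: "x \<in> H" "x \<noteq> 0\<^sub>v n" and eigen: "A *\<^sub>v x = l \<cdot>\<^sub>v x"
  shows "cmod l \<le> partial_norm \<mu> H A"
  unfolding partial_norm_def
proof (rule cSup_upper[OF _ bdd_above_partial_norm_ratios[OF \<mu> A H]])
  have "x \<in> carrier_vec n" using x H by auto
  then have "\<mu> (A *\<^sub>v x) / \<mu> x = cmod l"
    using eigen is_vec_norm_smult[OF \<mu>] is_vec_norm_pos[OF \<mu> _ x(2)] by simp
  then show "cmod l \<in> {\<mu> (A *\<^sub>v x) / \<mu> x | x. x \<in> H \<and> x \<noteq> 0\<^sub>v (dim_vec x)}"
    using x \<open>x \<in> carrier_vec n\<close> by force
qed

section \<open>Bases of invariant subspaces\<close>

lemma (in vectorspace) maximal_lin_indpt_subset_span: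
  assumes S: "S \<subseteq> carrier V" and T: "maximal T (\<lambda>T. T \<subseteq> S \<and> lin_indpt T)"
  shows "S \<subseteq> span T"
proof
  fix v assume v: "v \<in> S"
  have TS: "T \<subseteq> S" and li: "lin_indpt T" using T unfolding maximal_def by auto
  show "v \<in> span T"
  proof (rule ccontr)
    assume v_notin: "v \<notin> span T"
    then have "v \<notin> T" using in_own_span[of T] TS S by auto
    then have "lin_indpt (T \<union> {v})" using lin_dep_iff_in_span[of T v] TS S v li v_notin by auto
    then have "T \<union> {v} = T" using T TS v unfolding maximal_def by blast
    with \<open>v \<notin> T\<close> show False by auto
  qed
qed

lemma is_subspace_subset_carrier: "is_subspace n H \<Longrightarrow> H \<subseteq> carrier_vec n"
  unfolding is_subspace_def subspace_def submodule_def by (auto simp: module_vec_def)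

lemma basis_mat_exists:
  assumes H: "is_subspace n H"
  obtains V d where "basis_mat n H V d"
proof -
  interpret VS: vec_space "TYPE(complex)" n .
  have H_carrier: "H \<subseteq> carrier_vec n" using is_subspace_subset_carrier[OF H] .
  let ?P = "\<lambda>T. T \<subseteq> H \<and> VS.lin_indpt T"
  have "finite T \<and> card T \<le> n" if "?P T" for T
    using that VS.li_le_dim[OF VS.fin_dim] H_carrier VS.dim_is_n by auto
  moreover have "?P {}" unfolding VS.lin_dep_def by auto
  ultimately obtain T where T: "finite T" "maximal T ?P" using maximal_exists[of ?P n "{}"] by blast
  then have TH: "T \<subseteq> H" and li: "VS.lin_indpt T" unfolding maximal_def by auto
  have "VS.span T \<subseteq> H"
    using VS.span_is_subset[OF TH] H unfolding is_subspace_def subspace_def by auto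
  with VS.maximal_lin_indpt_subset_span[OF _ T(2)] H_carrier have span: "VS.span T = H" by auto
  obtain xs where xs: "set xs = T" "distinct xs" using finite_distinct_list[OF T(1)] by blast
  have "cols (mat_of_cols n xs) = xs" using xs TH H_carrier by (intro cols_mat_of_cols) auto
  then have "basis_mat n H (mat_of_cols n xs) (length xs)"
    unfolding basis_mat_def using xs li span by auto
  then show ?thesis using that by blast
qed

lemma basis_mat_cols:
  assumes "basis_mat n H V d"
  shows "set (cols V) \<subseteq> H"
proof -
  interpret VS: vec_space "TYPE(complex)" n .
  have "set (cols V) \<subseteq> carrier_vec n" using assms unfolding basis_mat_def cols_def by auto
  then show ?thesis using VS.in_own_span assms unfolding basis_mat_def by auto
qed

lemma basis_mat_dim_le:
  assumes V: "basis_mat n H V d"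
  shows "d \<le> n"
proof -
  interpret VS: vec_space "TYPE(complex)" n .
  have "set (cols V) \<subseteq> carrier_vec n" "VS.lin_indpt (set (cols V))"
    using V unfolding basis_mat_def cols_def by auto
  then have "card (set (cols V)) \<le> n" using VS.li_le_dim(2)[OF VS.fin_dim] VS.dim_is_n by simp
  moreover have "card (set (cols V)) = d" using distinct_card V unfolding basis_mat_def
    by (metis carrier_matD(2) cols_length)
  ultimately show ?thesis by simp
qed

lemma subspace_dim_basis_mat:
  assumes H: "is_subspace n H" and V: "basis_mat n H V d"
  shows "subspace_dim n H = d"
proof -
  interpret VS: vec_space "TYPE(complex)" n .
  have sub: "submodule class_ring H VS.V" using H unfolding is_subspace_def subspace_def by auto
  interpret VH: vectorspace class_ring "VS.V\<lparr>carrier := H\<rparr>"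
    using VS.subspace_is_vs H unfolding is_subspace_def by auto
  have "VH.basis (set (cols V))"
    unfolding VH.basis_def
      using VS.span_li_not_depend[OF basis_mat_cols[OF V] sub] V basis_mat_cols[OF V]
    unfolding basis_mat_def by auto
  then have "VH.dim = card (set (cols V))" using VH.dim_basis by simp
  also have "\<dots> = d" using distinct_card V unfolding basis_mat_def
    by (metis carrier_matD(2) cols_length)
  finally show ?thesis unfolding subspace_dim_def .
qed

lemma subspace_dim_le: "is_subspace n H \<Longrightarrow> subspace_dim n H \<le> n"
  by (metis basis_mat_dim_le basis_mat_exists subspace_dim_basis_mat)

lemma basis_mat_restriction_exists:
  assumes A: "A \<in> carrier_mat n n" and inv: "invariant_under A H" and V: "basis_mat n H V d"
  obtains B where "B \<in> carrier_mat d d" "A * V = V * B"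
proof -
  interpret VS: vec_space "TYPE(complex)" n .
  have V_carrier: "V \<in> carrier_mat n d" and span: "VS.span (set (cols V)) = H"
    using V unfolding basis_mat_def by auto
  have "\<exists>y \<in> carrier_vec d. V *\<^sub>v y = A *\<^sub>v col V j" if j: "j < d" for j
  proof -
    have "col V j \<in> set (cols V)" using j V_carrier by (auto simp: cols_def)
    then have "A *\<^sub>v col V j \<in> VS.col_space V"
      using inv basis_mat_cols[OF V] unfolding invariant_under_def VS.col_space_def span by auto
    then show ?thesis unfolding VS.col_space_eq[OF V_carrier] using V_carrier by auto
  qed
  then obtain y where y: "\<And>j. j < d \<Longrightarrow> y j \<in> carrier_vec d \<and> V *\<^sub>v y j = A *\<^sub>v col V j"
    by metis
  define B where "B = mat d d (\<lambda>(i, j). y j $ i)"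
  have B: "B \<in> carrier_mat d d" unfolding B_def by simp
  have "col (A * V) j = col (V * B) j" if "j < d" for j
  proof -
    have col_B: "col B j = y j" unfolding B_def using y[OF that] that by (intro eq_vecI) auto
    have "col (A * V) j = A *\<^sub>v col V j" by (rule col_mult2[OF A V_carrier that])
    also have "\<dots> = V *\<^sub>v col B j" unfolding col_B using y[OF that] by simp
    also have "\<dots> = col (V * B) j" by (rule col_mult2[OF V_carrier B that, symmetric])
    finally show ?thesis .
  qed
  then have "A * V = V * B" using A V_carrier B by (intro mat_col_eqI) auto
  with B show ?thesis by (rule that)
qed

lemma restr_mat_basis_mat:
  assumes A: "A \<in> carrier_mat n n" and H: "is_subspace n H" and inv: "invariant_under A H"
  obtains V d
  where "basis_mat n H V d" "restr_mat A H \<in> carrier_mat d d" "A * V = V * restr_mat A H"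
proof -
  obtain V d where V: "basis_mat n H V d" using basis_mat_exists[OF H] .
  obtain B where "B \<in> carrier_mat d d" "A * V = V * B"
    using basis_mat_restriction_exists[OF A inv V] .
  then have "\<exists>B V d. basis_mat (dim_row A) H V d \<and> B \<in> carrier_mat d d \<and> A * V = V * B"
    using V A by auto
  then have "\<exists>V d. basis_mat (dim_row A) H V d \<and> restr_mat A H \<in> carrier_mat d d
      \<and> A * V = V * restr_mat A H"
    unfolding restr_mat_def by (rule someI_ex)
  then show ?thesis using that A by auto
qed

lemma eigenvector_of_restriction:
  assumes A: "A \<in> carrier_mat n n" and V: "basis_mat n H V d" and B: "B \<in> carrier_mat d d"
    and AV: "A * V = V * B" and eigen: "eigenvalue B l"
  obtains x where "x \<in> H" "x \<noteq> 0\<^sub>v n" "A *\<^sub>v x = l \<cdot>\<^sub>v x"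
proof -
  interpret VS: vec_space "TYPE(complex)" n .
  obtain y where y: "y \<in> carrier_vec d" "y \<noteq> 0\<^sub>v d" "B *\<^sub>v y = l \<cdot>\<^sub>v y"
    using eigen B unfolding eigenvalue_def eigenvector_def by auto
  have V_carrier: "V \<in> carrier_mat n d" and distinct: "distinct (cols V)"
    and li: "VS.lin_indpt (set (cols V))" and span: "VS.span (set (cols V)) = H"
    using V unfolding basis_mat_def by auto
  have "V *\<^sub>v y \<in> H"
    using VS.col_space_eq[OF V_carrier] V_carrier y(1) unfolding VS.col_space_def span by auto
  moreover have "V *\<^sub>v y \<noteq> 0\<^sub>v n" using VS.lin_depI[OF V_carrier y(1,2) _ distinct] li by auto
  moreover have "A *\<^sub>v (V *\<^sub>v y) = l \<cdot>\<^sub>v (V *\<^sub>v y)"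
  proof -
    have "A *\<^sub>v (V *\<^sub>v y) = V *\<^sub>v (B *\<^sub>v y)"
      using assoc_mult_mat_vec[OF A V_carrier y(1)] assoc_mult_mat_vec[OF V_carrier B y(1)] AV
        by simp
    also have "\<dots> = l \<cdot>\<^sub>v (V *\<^sub>v y)" using mult_mat_vec[OF V_carrier y(1)] y(3) by simp
    finally show ?thesis .
  qed
  ultimately show ?thesis by (rule that)
qed

lemma not_eigenvalue_restriction:
  assumes A: "A \<in> carrier_mat n n" and H: "is_subspace n H" and V: "basis_mat n H V d"
    and B: "B \<in> carrier_mat d d" and AV: "A * V = V * B"
    and \<mu>: "is_vec_norm n \<mu>" and large: "cmod l > partial_norm \<mu> H A"
  shows "\<not> eigenvalue B l"
proof
  assume "eigenvalue B l"
  then obtain x where "x \<in> H" "x \<noteq> 0\<^sub>v n" "A *\<^sub>v x = l \<cdot>\<^sub>v x"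
    by (rule eigenvector_of_restriction[OF A V B AV])
  then have "cmod l \<le> partial_norm \<mu> H A"
    by (rule eigenvalue_cmod_le_partial_norm[OF \<mu> A is_subspace_subset_carrier[OF H]])
  with large show False by simp
qed

section \<open>Block triangular form\<close>

definition incl_mat :: "nat \<Rightarrow> nat \<Rightarrow> 'a :: {zero, one} mat" where
  "incl_mat n d = mat n d (\<lambda>(i, j). if i = j then 1 else 0)"

lemma incl_mat_carrier [simp]:
  "incl_mat n d \<in> carrier_mat n d" "dim_row (incl_mat n d) = n" "dim_col (incl_mat n d) = d"
  unfolding incl_mat_def by simp_all

lemma mult_incl_mat_index:
  fixes M :: "'a :: semiring_1 mat"
  assumes M: "M \<in> carrier_mat m n" and "d \<le> n" "i < m" "j < d"
  shows "(M * incl_mat n d) $$ (i, j) = M $$ (i, j)"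
proof -
  have "(M * incl_mat n d) $$ (i, j) = (\<Sum>k\<in>{0..<n}. M $$ (i, k) * (if k = j then 1 else 0))"
    using assms by (auto simp: incl_mat_def scalar_prod_def intro!: sum.cong)
  also have "\<dots> = (\<Sum>k\<in>{0..<n}. if k = j then M $$ (i, k) else 0)"
    by (rule sum.cong) auto
  also have "\<dots> = M $$ (i, j)" using assms by simp
  finally show ?thesis .
qed

lemma incl_mat_mult_index:
  fixes B :: "'a :: semiring_1 mat"
  assumes B: "B \<in> carrier_mat d m" and "d \<le> n" "i < n" "j < m"
  shows "(incl_mat n d * B) $$ (i, j) = (if i < d then B $$ (i, j) else 0)"
proof -
  have "(incl_mat n d * B) $$ (i, j) = (\<Sum>k\<in>{0..<d}. (if i = k then 1 else 0) * B $$ (k, j))"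
    using assms by (auto simp: incl_mat_def scalar_prod_def intro!: sum.cong)
  also have "\<dots> = (\<Sum>k\<in>{0..<d}. if k = i then B $$ (k, j) else 0)"
    by (rule sum.cong) auto
  also have "\<dots> = (if i < d then B $$ (i, j) else 0)" by simp
  finally show ?thesis .
qed

lemma (in vec_space) lin_indpt_extend_to_basis:
  assumes xs: "set xs \<subseteq> carrier_vec n" and distinct: "distinct xs" and li: "lin_indpt (set xs)"
  obtains us where "distinct (xs @ us)" "length (xs @ us) = n" "set (xs @ us) \<subseteq> carrier_vec n"
    "lin_indpt (set (xs @ us))"
proof -
  define S where "S = set xs \<union> set (unit_vecs n)"
  have S: "S \<subseteq> carrier_vec n" unfolding S_def using xs unit_vecs_carrier by auto
  let ?P = "\<lambda>T. T \<subseteq> S \<and> lin_indpt T"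
  obtain T where T: "finite T" "maximal T ?P" "set xs \<subseteq> T"
    using maximal_exists_superset[of S ?P "set xs"] li unfolding S_def by auto
  have TS: "T \<subseteq> S" and li_T: "lin_indpt T" using T(2) unfolding maximal_def by auto
  have T_carrier: "T \<subseteq> carrier_vec n" using TS S by auto
  have "set (unit_vecs n) \<subseteq> span T"
    using maximal_lin_indpt_subset_span[OF S T(2)] unfolding S_def by auto
  then have "span (set (unit_vecs n)) \<subseteq> span T"
    using span_is_subset span_is_submodule[OF T_carrier] by blast
  then have "span T = carrier_vec n" using span_unit_vecs_is_carrier span_closed[OF T_carrier]
    by auto
  then have "basis T" unfolding basis_def using li_T T_carrier by auto
  then have card_T: "card T = n" using dim_basis[OF T(1)] dim_is_n by simp
  obtain us where us: "set us = T - set xs" "distinct us"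
    using finite_distinct_list[of "T - set xs"] T(1) by blast
  have ws: "set (xs @ us) = T" "distinct (xs @ us)" using us T(3) distinct by auto
  then have "length (xs @ us) = n" using distinct_card card_T by metis
  then show ?thesis by (rule that[OF ws(2)]) (use ws(1) T_carrier li_T in simp_all)
qed

lemma basis_mat_extend_invertible:
  assumes V: "basis_mat n H V d"
  obtains W W' where "W \<in> carrier_mat n n" "W' \<in> carrier_mat n n"
    "W' * W = 1\<^sub>m n" "W * W' = 1\<^sub>m n" "W * incl_mat n d = V"
proof -
  interpret VS: vec_space "TYPE(complex)" n .
  have V_carrier: "V \<in> carrier_mat n d" and "distinct (cols V)" "VS.lin_indpt (set (cols V))"
    using V unfolding basis_mat_def by auto
  moreover have "set (cols V) \<subseteq> carrier_vec n" using V_carrier by (auto simp: cols_def)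
  ultimately obtain us where ws: "distinct (cols V @ us)" "length (cols V @ us) = n"
    "set (cols V @ us) \<subseteq> carrier_vec n" "VS.lin_indpt (set (cols V @ us))"
    using VS.lin_indpt_extend_to_basis by blast
  define W where "W = mat_of_cols n (cols V @ us)"
  have W: "W \<in> carrier_mat n n" unfolding W_def using ws(2) by (metis mat_of_cols_carrier(1))
  have "cols W = cols V @ us" unfolding W_def using ws(3) by (rule cols_mat_of_cols)
  then have "VS.rank W = n" using VS.lin_indpt_full_rank[OF W] ws by auto
  then have "det W \<noteq> 0" using VS.det_rank_iff[OF W] by auto
  from det_non_zero_imp_unit[OF W this, unfolded Units_def, of "()"]
  obtain W' where W': "W' \<in> carrier_mat n n" "W' * W = 1\<^sub>m n" "W * W' = 1\<^sub>m n"
    by (auto simp: ring_mat_def)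
  have "(W * incl_mat n d) $$ (i, j) = V $$ (i, j)" if "i < n" "j < d" for i j
  proof -
    have "W $$ (i, j) = V $$ (i, j)"
      unfolding W_def using that ws(2) basis_mat_dim_le[OF V] V_carrier
      by (simp add: mat_of_cols_index nth_append)
    with mult_incl_mat_index[OF W basis_mat_dim_le[OF V] that] show ?thesis by (rule trans)
  qed
  then have "W * incl_mat n d = V" using W V_carrier by (intro eq_matI) auto
  with W W' show ?thesis by (rule that)
qed

lemma four_block_mat_of_mult_incl_mat:
  fixes P B :: "'a :: semiring_1 mat"
  assumes P: "P \<in> carrier_mat n n" and B: "B \<in> carrier_mat d d" and "d \<le> n"
    and PE: "P * incl_mat n d = incl_mat n d * B"
  obtains C D where "C \<in> carrier_mat d (n - d)" "D \<in> carrier_mat (n - d) (n - d)"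
    "P = four_block_mat B C (0\<^sub>m (n - d) d) D"
proof -
  have P_left: "P $$ (i, j) = (if i < d then B $$ (i, j) else 0)" if "i < n" "j < d" for i j
    using mult_incl_mat_index[OF P \<open>d \<le> n\<close> that] incl_mat_mult_index[OF B \<open>d \<le> n\<close> that] PE
    by simp
  define C where "C = mat d (n - d) (\<lambda>(i, j). P $$ (i, j + d))"
  define D where "D = mat (n - d) (n - d) (\<lambda>(i, j). P $$ (i + d, j + d))"
  have "P = four_block_mat B C (0\<^sub>m (n - d) d) D"
    using P B \<open>d \<le> n\<close> P_left by (intro eq_matI) (auto simp: C_def D_def)
  moreover have "C \<in> carrier_mat d (n - d)" "D \<in> carrier_mat (n - d) (n - d)"
    unfolding C_def D_def by auto
  ultimately show ?thesis using that by blast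
qed

lemma similar_mat_wit_block_triangular:
  fixes A B V W W' :: "'a :: comm_ring_1 mat"
  assumes A: "A \<in> carrier_mat n n" and B: "B \<in> carrier_mat d d" and "d \<le> n"
    and AV: "A * V = V * B"
    and W: "W \<in> carrier_mat n n" and W': "W' \<in> carrier_mat n n"
    and W'W: "W' * W = 1\<^sub>m n" and WW': "W * W' = 1\<^sub>m n"
    and WV: "W * incl_mat n d = V"
  obtains C D where "C \<in> carrier_mat d (n - d)" "D \<in> carrier_mat (n - d) (n - d)"
    "similar_mat_wit A (four_block_mat B C (0\<^sub>m (n - d) d) D) W W'"
proof -
  define E :: "'a mat" where "E = incl_mat n d"
  have E: "E \<in> carrier_mat n d" unfolding E_def by simp
  have V: "V \<in> carrier_mat n d" using WV W E unfolding E_def[symmetric] by auto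
  define P where "P = W' * A * W"
  have P: "P \<in> carrier_mat n n" unfolding P_def using W' A W by auto
  have W'A: "W' * A \<in> carrier_mat n n" using W' A by simp
  have "P * E = (W' * A) * V" unfolding P_def WV[folded E_def, symmetric]
    by (rule assoc_mult_mat[OF W'A W E])
  also have "\<dots> = W' * (V * B)" unfolding AV[symmetric] by (rule assoc_mult_mat[OF W' A V])
  also have "\<dots> = (W' * V) * B" by (rule assoc_mult_mat[OF W' V B, symmetric])
  also have "W' * V = (W' * W) * E"
    unfolding WV[folded E_def, symmetric] by (rule assoc_mult_mat[OF W' W E, symmetric])
  finally have "P * E = E * B" unfolding W'W using E by simp
  then obtain C D where C: "C \<in> carrier_mat d (n - d)" and D: "D \<in> carrier_mat (n - d) (n - d)"
    and P_block: "P = four_block_mat B C (0\<^sub>m (n - d) d) D"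
    using four_block_mat_of_mult_incl_mat[OF P B \<open>d \<le> n\<close>] unfolding E_def by blast
  have "W * P = (W * (W' * A)) * W" unfolding P_def by (rule assoc_mult_mat[OF W W'A W, symmetric])
  also have "W * (W' * A) = A" using assoc_mult_mat[OF W W' A] A by (simp add: WW')
  finally have "W * P * W' = A * (W * W')" using assoc_mult_mat[OF A W W'] by simp
  then have "A = W * P * W'" using A by (simp add: WW')
  then have "similar_mat_wit A (four_block_mat B C (0\<^sub>m (n - d) d) D) W W'"
    unfolding similar_mat_wit_def Let_def P_block[symmetric] using A P W W' W'W WW' by auto
  with C D show ?thesis by (rule that)
qed

lemma similar_block_triangular_of_basis_mat:
  assumes A: "A \<in> carrier_mat n n" and V: "basis_mat n H V d" and B: "B \<in> carrier_mat d d"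
    and AV: "A * V = V * B"
  obtains C D where "C \<in> carrier_mat d (n - d)" "D \<in> carrier_mat (n - d) (n - d)"
    "similar_mat A (four_block_mat B C (0\<^sub>m (n - d) d) D)"
proof -
  obtain W W' where W: "W \<in> carrier_mat n n" "W' \<in> carrier_mat n n" "W' * W = 1\<^sub>m n"
    "W * W' = 1\<^sub>m n" "W * incl_mat n d = V"
    by (rule basis_mat_extend_invertible[OF V])
  obtain C D where C: "C \<in> carrier_mat d (n - d)" and D: "D \<in> carrier_mat (n - d) (n - d)"
    and wit: "similar_mat_wit A (four_block_mat B C (0\<^sub>m (n - d) d) D) W W'"
    by (rule similar_mat_wit_block_triangular[OF A B basis_mat_dim_le[OF V] AV W])
  from wit have "similar_mat A (four_block_mat B C (0\<^sub>m (n - d) d) D)"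
    unfolding similar_mat_def by blast
  with C D show ?thesis by (rule that)
qed

section \<open>Multiplicities of block triangular matrices\<close>

lemma char_poly_four_block_mat:
  fixes B C D :: "'a :: idom mat"
  assumes B: "B \<in> carrier_mat d d" and C: "C \<in> carrier_mat d m" and D: "D \<in> carrier_mat m m"
  shows "char_poly (four_block_mat B C (0\<^sub>m m d) D) = char_poly B * char_poly D"
proof -
  let ?cm = "\<lambda>A. [:0, 1:] \<cdot>\<^sub>m 1\<^sub>m (dim_row A) + map_mat (\<lambda>a. [:- a:]) A"
  have "char_poly (four_block_mat B C (0\<^sub>m m d) D) = det (?cm (four_block_mat B C (0\<^sub>m m d) D))"
    unfolding char_poly_defs ..
  also have "?cm (four_block_mat B C (0\<^sub>m m d) D)
      = four_block_mat (?cm B) (map_mat (\<lambda>a. [:- a:]) C) (0\<^sub>m m d) (?cm D)"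
    using B C D by (intro eq_matI) (auto simp: one_poly_def)
  also have "det \<dots> = det (?cm B) * det (?cm D)"
    by (rule det_four_block_mat_lower_left_zero[of _ d _ m]) (use B C D in auto)
  finally show ?thesis unfolding char_poly_defs .
qed

lemma alg_mult_four_block_mat_le:
  assumes B: "B \<in> carrier_mat d d" and C: "C \<in> carrier_mat d m" and D: "D \<in> carrier_mat m m"
  shows "alg_mult (four_block_mat B C (0\<^sub>m m d) D) l \<le> alg_mult B l + m"
proof -
  have B0: "char_poly B \<noteq> 0" and D0: "char_poly D \<noteq> 0" and deg_D: "degree (char_poly D) = m"
    using degree_monic_char_poly[OF B] degree_monic_char_poly[OF D] by auto
  have "alg_mult (four_block_mat B C (0\<^sub>m m d) D) l
      = alg_mult B l + Polynomial.order l (char_poly D)"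
    unfolding alg_mult_def char_poly_four_block_mat[OF B C D] using B0 D0 by (simp add: order_mult)
  also have "Polynomial.order l (char_poly D) \<le> m" using order_degree[OF D0] deg_D by simp
  finally show ?thesis by simp
qed

lemma alg_mult_eq_0_iff:
  assumes "B \<in> carrier_mat d d"
  shows "alg_mult B l = 0 \<longleftrightarrow> \<not> eigenvalue B l"
  using eigenvalue_root_char_poly[OF assms] order_root[of "char_poly B" l]
    degree_monic_char_poly[OF assms] unfolding alg_mult_def by auto

lemma mat_kernel_four_block_vec_last_0:
  fixes B C D :: "'a :: field mat"
  assumes B: "B \<in> carrier_mat d d" and C: "C \<in> carrier_mat d m" and D: "D \<in> carrier_mat m m"
  shows "{x \<in> mat_kernel (four_block_mat B C (0\<^sub>m m d) D). vec_last x m = 0\<^sub>v m}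
    = (\<lambda>y. y @\<^sub>v 0\<^sub>v m) ` mat_kernel B" (is "?K = _")
proof
  interpret vardim "TYPE('a)" .
  let ?T = "four_block_mat B C (0\<^sub>m m d) D"
  have T: "?T \<in> carrier_mat (d + m) (d + m)" using four_block_carrier_mat[OF B D] .
  show "?K \<subseteq> (\<lambda>y. y @\<^sub>v 0\<^sub>v m) ` mat_kernel B"
  proof
    fix x assume "x \<in> ?K"
    then have x_ker: "x \<in> mat_kernel ?T" and x_last: "vec_last x m = 0\<^sub>v m" by auto
    have x: "x \<in> carrier_vec (d + m)" using x_ker mat_kernel_carrier[OF T] by auto
    define y where "y = vec_first x d"
    have y: "y \<in> carrier_vec d" unfolding y_def by simp
    have x_eq: "x = y @\<^sub>v 0\<^sub>v m" using vec_first_last_append[OF x] x_last unfolding y_def by simp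
    have "0\<^sub>v d @\<^sub>v 0\<^sub>v m = ?T *\<^sub>v x" using mat_kernelD[OF T x_ker] by (intro eq_vecI) auto
    also have "\<dots> = (B *\<^sub>v y + C *\<^sub>v 0\<^sub>v m) @\<^sub>v (0\<^sub>m m d *\<^sub>v y + D *\<^sub>v 0\<^sub>v m)"
      unfolding x_eq using B C D y by (intro four_block_mat_mult_vec) auto
    also have "B *\<^sub>v y + C *\<^sub>v 0\<^sub>v m = B *\<^sub>v y" using B C y by auto
    finally have "0\<^sub>v d = B *\<^sub>v y"
      using append_vec_eq[OF zero_carrier_vec mult_mat_vec_carrier[OF B y]] by blast
    then have "y \<in> mat_kernel B" using B y by (intro mat_kernelI) auto
    then show "x \<in> (\<lambda>y. y @\<^sub>v 0\<^sub>v m) ` mat_kernel B" using x_eq by auto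
  qed
  show "(\<lambda>y. y @\<^sub>v 0\<^sub>v m) ` mat_kernel B \<subseteq> ?K"
  proof safe
    fix y assume y: "y \<in> mat_kernel B"
    then show "y @\<^sub>v 0\<^sub>v m \<in> mat_kernel ?T" by (rule kernel_padr[OF _ B C D])
    have "y \<in> carrier_vec d" using y mat_kernel_carrier[OF B] by auto
    then show "vec_last (y @\<^sub>v 0\<^sub>v m) m = 0\<^sub>v m" by (intro eq_vecI) (auto simp: vec_last_def)
  qed
qed

lemma linear_map_into_vec_dim_le:
  assumes f: "linear_map class_ring M (cvs m) f" and fin: "vectorspace.fin_dim class_ring M"
  shows "vectorspace.dim class_ring M
    \<le> vectorspace.dim class_ring (M\<lparr>carrier := mod_hom.ker M (cvs m) f\<rparr>) + m"
proof -
  interpret f: linear_map class_ring M "cvs m" f by (rule f)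
  have "is_subspace m f.imT" unfolding is_subspace_def by (rule f.imT_is_subspace)
  then have "vectorspace.dim class_ring ((cvs m)\<lparr>carrier := f.imT\<rparr>) \<le> m"
    using subspace_dim_le unfolding subspace_dim_def by blast
  with f.rank_nullity[OF fin] show ?thesis by simp
qed

lemma kernel_dim_four_block_mat_le:
  fixes B C D :: "complex mat"
  assumes B: "B \<in> carrier_mat d d" and C: "C \<in> carrier_mat d m" and D: "D \<in> carrier_mat m m"
  shows "kernel_dim (four_block_mat B C (0\<^sub>m m d) D) \<le> kernel_dim B + m"
proof -
  define T where "T = four_block_mat B C (0\<^sub>m m d) D"
  have T: "T \<in> carrier_mat (d + m) (d + m)" unfolding T_def using four_block_carrier_mat[OF B D] .
  interpret KT: kernel "d + m" "d + m" T by unfold_locales (rule T)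
  interpret KB: kernel d d B by unfold_locales (rule B)
  interpret VM: vec_space "TYPE(complex)" m .
  define f where "f x = vec_last x m" for x :: "complex vec"
  have dim_KT: "dim_vec x = d + m" if "x \<in> mat_kernel T" for x
    using that mat_kernel_carrier[OF T] by auto
  have "f \<in> module_hom class_ring KT.VK VM.V"
    unfolding module_hom_def f_def by (auto simp: module_vec_def vec_last_def dim_KT)
  then interpret f: linear_map class_ring KT.VK VM.V f
    using KT.Ker.vectorspace_axioms VM.vectorspace_axioms
    unfolding linear_map_def mod_hom_def mod_hom_axioms_def vectorspace_def by auto
  have "KT.Ker.fin_dim"
    using kernel_basis_exists[OF T] unfolding KT.Ker.fin_dim_def KT.Ker.basis_def by auto
  then have KT_le: "KT.dim \<le> vectorspace.dim class_ring (KT.VK\<lparr>carrier := f.kerT\<rparr>) + m"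
    by (rule linear_map_into_vec_dim_le[OF f.linear_map_axioms])
  interpret vardim "TYPE(complex)" .
  let ?g = "\<lambda>y. y @\<^sub>v 0\<^sub>v m"
  have ker_f: "f.kerT = ?g ` mat_kernel B"
    using mat_kernel_four_block_vec_last_0[OF B C D, folded T_def] unfolding f.ker_def f_def
    by (simp add: module_vec_def)
  interpret ker_f: vectorspace class_ring "KT.VK\<lparr>carrier := f.kerT\<rparr>"
    by (rule KT.Ker.subspace_is_vs[OF f.kerT_is_subspace])
  have KB_carrier: "x \<in> carrier_vec d" if "x \<in> mat_kernel B" for x
    using that mat_kernel_carrier[OF B] by auto
  have "?g \<in> module_hom class_ring KB.VK (KT.VK\<lparr>carrier := f.kerT\<rparr>)"
    unfolding module_hom_def ker_f
    by (auto simp: module_vec_def append_vec_add[where n = d and m = m] KB_carrier)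
  then interpret g: linear_map class_ring KB.VK "KT.VK\<lparr>carrier := f.kerT\<rparr>" ?g
    using KB.Ker.vectorspace_axioms ker_f.vectorspace_axioms
    unfolding linear_map_def mod_hom_def mod_hom_axioms_def vectorspace_def by auto
  have "KB.Ker.fin_dim"
    using kernel_basis_exists[OF B] unfolding KB.Ker.fin_dim_def KB.Ker.basis_def by auto
  moreover have "inj_on ?g (carrier KB.VK)" using padr_inj KB_carrier by (auto intro: inj_on_subset)
  moreover have "?g ` carrier KB.VK = carrier (KT.VK\<lparr>carrier := f.kerT\<rparr>)" using ker_f by simp
  ultimately have "KB.dim = ker_f.dim" by (rule g.dim_eq)
  with KT_le show ?thesis unfolding T_def[symmetric] by simp
qed

lemma geom_mult_four_block_mat_le:
  assumes B: "B \<in> carrier_mat d d" and C: "C \<in> carrier_mat d m" and D: "D \<in> carrier_mat m m"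
  shows "geom_mult (four_block_mat B C (0\<^sub>m m d) D) l \<le> geom_mult B l + m"
proof -
  have "four_block_mat B C (0\<^sub>m m d) D - l \<cdot>\<^sub>m 1\<^sub>m (d + m)
      = four_block_mat (B - l \<cdot>\<^sub>m 1\<^sub>m d) C (0\<^sub>m m d) (D - l \<cdot>\<^sub>m 1\<^sub>m m)"
    using B C D by (intro eq_matI) auto
  moreover have "B - l \<cdot>\<^sub>m 1\<^sub>m d \<in> carrier_mat d d" "D - l \<cdot>\<^sub>m 1\<^sub>m m \<in> carrier_mat m m"
    using B D by auto
  ultimately show ?thesis unfolding geom_mult_def
    using B D kernel_dim_four_block_mat_le[OF _ C] by simp
qed

lemma geom_mult_eq_kernel_dim_char_matrix:
  "A \<in> carrier_mat n n \<Longrightarrow> geom_mult A l = kernel_dim (char_matrix A l)"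
  unfolding geom_mult_def char_matrix_def by (auto intro!: arg_cong[where f = kernel_dim])

lemma geom_mult_similar:
  assumes A: "A \<in> carrier_mat n n" and sim: "similar_mat A P"
  shows "geom_mult A l = geom_mult P l"
proof -
  obtain W W' where wit: "similar_mat_wit A P W W'" using sim unfolding similar_mat_def by blast
  have P: "P \<in> carrier_mat n n" using similar_mat_witD2[OF A wit] by auto
  have "kernel.dim n (char_matrix A l) = kernel.dim n (char_matrix P l)"
    by (rule similar_mat_wit_kernel_dim[OF _ similar_mat_wit_char_matrix[OF wit]]) (use A in simp)
  moreover have "char_matrix A l \<in> carrier_mat n n" "char_matrix P l \<in> carrier_mat n n"
    using A P by auto
  ultimately show ?thesis unfolding geom_mult_eq_kernel_dim_char_matrix[OF A]
      geom_mult_eq_kernel_dim_char_matrix[OF P] kernel_dim_def by simp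
qed

lemma geom_mult_eq_0_if_not_eigenvalue:
  assumes B: "B \<in> carrier_mat d d" and not_eigen: "\<not> eigenvalue B l"
  shows "geom_mult B l = 0"
proof -
  let ?M = "char_matrix B l"
  have M: "?M \<in> carrier_mat d d" using B by simp
  interpret K: kernel d d ?M by unfold_locales (rule M)
  have "mat_kernel ?M = {0\<^sub>v d}"
  proof
    show "mat_kernel ?M \<subseteq> {0\<^sub>v d}"
      using not_eigen eigenvalue_char_matrix[OF B] mat_kernelD[OF M] by blast
    show "{0\<^sub>v d} \<subseteq> mat_kernel ?M" using M by (auto intro: mat_kernelI)
  qed
  moreover have "\<not> K.Ker.lin_dep {}" unfolding module.lin_dep_def[OF K.Ker.module_axioms] by auto
  ultimately have "K.Ker.basis {}" unfolding K.Ker.basis_def using K.Ker.span_empty by auto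
  then have "K.dim = 0" using K.Ker.dim_basis by fastforce
  then show ?thesis unfolding geom_mult_eq_kernel_dim_char_matrix[OF B] by simp
qed

lemma mult_le_restriction:
  assumes A: "A \<in> carrier_mat n n" and V: "basis_mat n H V d" and B: "B \<in> carrier_mat d d"
    and AV: "A * V = V * B"
  shows "alg_mult A l \<le> alg_mult B l + (n - d)" and "geom_mult A l \<le> geom_mult B l + (n - d)"
proof -
  obtain C D where C: "C \<in> carrier_mat d (n - d)" and D: "D \<in> carrier_mat (n - d) (n - d)"
    and sim: "similar_mat A (four_block_mat B C (0\<^sub>m (n - d) d) D)"
    using similar_block_triangular_of_basis_mat[OF A V B AV] by blast
  show "alg_mult A l \<le> alg_mult B l + (n - d)"
    using alg_mult_four_block_mat_le[OF B C D] char_poly_similar[OF sim] unfolding alg_mult_def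
      by simp
  show "geom_mult A l \<le> geom_mult B l + (n - d)"
    using geom_mult_four_block_mat_le[OF B C D] geom_mult_similar[OF A sim] by simp
qed

theorem theorem5p1:
  fixes A :: "complex mat" and H :: "complex vec set" and n :: nat
  assumes A: "A \<in> carrier_mat n n"
    and H: "is_subspace n H"
    and inv: "invariant_under A H"
  shows "(\<forall>l::complex.
           alg_mult A l \<le> alg_mult (restr_mat A H) l + n - subspace_dim n H \<and>
           geom_mult A l \<le> geom_mult (restr_mat A H) l + n - subspace_dim n H) \<and>
         (\<forall>(\<mu> :: complex vec \<Rightarrow> real) (l::complex).
           is_vec_norm n \<mu> \<longrightarrow> cmod l > partial_norm \<mu> H A \<longrightarrow>
           alg_mult A l \<le> n - subspace_dim n H \<and> geom_mult A l \<le> n - subspace_dim n H)"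
proof -
  obtain V d where V: "basis_mat n H V d" and B: "restr_mat A H \<in> carrier_mat d d"
    and AV: "A * V = V * restr_mat A H"
    using restr_mat_basis_mat[OF A H inv] .
  have dim: "subspace_dim n H = d" by (rule subspace_dim_basis_mat[OF H V])
  have "d \<le> n" by (rule basis_mat_dim_le[OF V])
  note le = mult_le_restriction[OF A V B AV]
  show ?thesis
    unfolding dim
  proof (intro conjI allI impI)
    fix l
    show "alg_mult A l \<le> alg_mult (restr_mat A H) l + n - d"
      and "geom_mult A l \<le> geom_mult (restr_mat A H) l + n - d"
      using le[of l] \<open>d \<le> n\<close> by simp_all
  next
    fix \<mu> l assume "is_vec_norm n \<mu>" "partial_norm \<mu> H A < cmod l"
    then have "\<not> eigenvalue (restr_mat A H) l" by (rule not_eigenvalue_restriction[OF A H V B AV])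
    then have "alg_mult (restr_mat A H) l = 0" "geom_mult (restr_mat A H) l = 0"
      using alg_mult_eq_0_iff[OF B] geom_mult_eq_0_if_not_eigenvalue[OF B] by blast+
    then show "alg_mult A l \<le> n - d" and "geom_mult A l \<le> n - d" using le[of l] by simp_all
  qed
qed

end
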